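(* Let $K\in L^2(X\times X,\mu\times\mu)$ be $L^2(X,\mu)$-positive definite. If $\limsup_{n\to\infty}\int_X E_n(K)(x,x)\,d\mu(x)<\infty$, then $\limsup_{n\to\infty}\mathrm{tr}(\mathcal{E}^n_K)<\infty$.
   Context: Standing setting: $X$ is a Hausdorff, locally compact, second countable topological space and $\mu$ is a non-degenerate, $\sigma$-finite, locally finite Borel measure on $X$. Fix an open cover of $X$ by open sets, each the interior of a compact set and of finite $\mu$-measure, and extract a countable subcover $\{\mathcal{A}_k\}_{k\ge 0}$. Let $\mathcal{P}_0$ be the partition of $X$ consisting of $\mathcal{A}_k\setminus\overline{\mathcal{A}_0\cup\dots\cup\mathcal{A}_{k-1}}$ and $\partial\mathcal{A}_k\setminus\overline{\mathcal{A}_0\cup\dots\cup\mathcal{A}_{k-1}}$, $k\ge0$. Fix a countable base $\{\mathcal{U}_n\}_{n\ge0}$ and set $\mathcal{P}_{n+1}=\{\mathcal{U}_n\cap A\}\cup\{(X\setminus\overline{\mathcal{U}_n})\cap A\}\cup\{\partial\mathcal{U}_n\cap A\}$, $A\in\mathcal{P}_n$. $O_n(x)$ is the unique element of $\mathcal{P}_n$ containing $x$; $\mathfrak{N}=\{x:\mu(O_m(x))=0\text{ for some }m\}$. For $u,v\in X\setminus\mathfrak{N}$, $E_n(K)(u,v)=\frac{1}{\mu(O_n(u))\mu(O_n(v))}\int_{O_n(u)}\int_{O_n(v)}K(x,y)\,d\mu(y)\,d\mu(x)$, and $\mathcal{E}^n_K$ is the integral operator on $L^2(X,\mu)$ with kernel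 $E_n(K)$. $K$ is $L^2(X,\mu)$-positive definite if its integral operator $\mathcal{K}(f)=\int_XK(\cdot,y)f(y)\,d\mu(y)$ satisfies $\langle\mathcal{K}f,f\rangle\ge0$ for all $f\in L^2(X,\mu)$. $\mathrm{tr}$ denotes the trace of a trace-class operator. *)

theory Defs
  imports "HOL-Analysis.Analysis"
begin

fun partitionP :: "(nat \<Rightarrow> 'a::topological_space set) \<Rightarrow> (nat \<Rightarrow> 'a set) \<Rightarrow> nat \<Rightarrow> 'a set set" where
  "partitionP A U 0 =
     range (\<lambda>k. A k - closure (\<Union>j<k. A j)) \<union>
     range (\<lambda>k. frontier (A k) - closure (\<Union>j<k. A j))"
| "partitionP A U (Suc n) =
     (\<Union>B\<in>partitionP A U n.
        {U n \<inter> B, (UNIV - closure (U n)) \<inter> B, frontier (U n) \<inter> B})"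

definition cellO :: "(nat \<Rightarrow> 'a::topological_space set) \<Rightarrow> (nat \<Rightarrow> 'a set) \<Rightarrow> nat \<Rightarrow> 'a \<Rightarrow> 'a set" where
  "cellO A U n x = (THE B. B \<in> partitionP A U n \<and> x \<in> B)"

definition nullpts :: "'a::topological_space measure \<Rightarrow> (nat \<Rightarrow> 'a set) \<Rightarrow> (nat \<Rightarrow> 'a set) \<Rightarrow> 'a set" where
  "nullpts M A U = {x. \<exists>m. emeasure M (cellO A U m x) = 0}"

text \<open>The averaged kernel E_n(K); set to 0 on the null set \<frak>N where it is undefined.\<close>
definition En :: "'a::topological_space measure \<Rightarrow> (nat \<Rightarrow> 'a set) \<Rightarrow> (nat \<Rightarrow> 'a set) \<Rightarrow> nat
                  \<Rightarrow> ('a \<Rightarrow> 'a \<Rightarrow> real) \<Rightarrow> 'a \<Rightarrow> 'a \<Rightarrow> real" where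
  "En M A U n K u v =
     (if u \<notin> nullpts M A U \<and> v \<notin> nullpts M A U then
        1 / (measure M (cellO A U n u) * measure M (cellO A U n v)) *
        (LINT x:cellO A U n u|M. (LINT y:cellO A U n v|M. K x y))
      else 0)"

definition L2 :: "'a measure \<Rightarrow> ('a \<Rightarrow> real) set" where
  "L2 M = {f. f \<in> borel_measurable M \<and> integrable M (\<lambda>x. (f x)\<^sup>2)}"

definition intop :: "'a measure \<Rightarrow> ('a \<Rightarrow> 'a \<Rightarrow> real) \<Rightarrow> ('a \<Rightarrow> real) \<Rightarrow> 'a \<Rightarrow> real" where
  "intop M k f = (\<lambda>x. LINT y|M. k x y * f y)"

definition L2_pos_def_kernel :: "'a measure \<Rightarrow> ('a \<Rightarrow> 'a \<Rightarrow> real) \<Rightarrow> bool" where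
  "L2_pos_def_kernel M k \<longleftrightarrow> (\<forall>f\<in>L2 M. (LINT x|M. intop M k f x * f x) \<ge> 0)"

definition orthonormal_fam :: "'a measure \<Rightarrow> nat \<Rightarrow> (nat \<Rightarrow> 'a \<Rightarrow> real) \<Rightarrow> bool" where
  "orthonormal_fam M m e \<longleftrightarrow> (\<forall>i<m. e i \<in> L2 M) \<and>
     (\<forall>i<m. \<forall>j<m. (LINT x|M. e i x * e j x) = (if i = j then 1 else 0))"

text \<open>For a positive operator this is its trace (finite iff trace class).\<close>
definition op_trace :: "'a measure \<Rightarrow> ('a \<Rightarrow> 'a \<Rightarrow> real) \<Rightarrow> ereal" where
  "op_trace M k = (SUP (m, e)\<in>{(m, e). orthonormal_fam M m e}.
       ereal (\<Sum>i<m. LINT x|M. intop M k (e i) x * e i x))"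

end

theory Submission
  imports Defs
begin

text \<open>
  On each product \<open>c\<^sub>j \<times> c\<^sub>l\<close> of cells of the countable partition \<open>P\<^sub>n\<close> the kernel
  \<open>E\<^sub>n(K)\<close> is the mean of \<open>K\<close>, so in the orthonormal system of normalised cell indicators it
  is the matrix \<open>k\<^sub>j\<^sub>l = (\<integral>\<integral>\<^bsub>c\<^sub>j \<times> c\<^sub>l\<^esub> K) / sqrt (\<mu> c\<^sub>j \<mu> c\<^sub>l)\<close>. Positive definiteness of \<open>K\<close>,
  tested on step functions, makes every finite section of \<open>(k\<^sub>j\<^sub>l)\<close> positive semidefinite,
  hence of the form \<open>L\<^sup>T L\<close>. For an orthonormal family \<open>(e\<^sub>i)\<close>, \<open>\<langle>E\<^sup>n\<^sub>K e\<^sub>i, e\<^sub>i\<rangle>\<close> is the limit of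
  these quadratic forms at the cell coefficients of \<open>e\<^sub>i\<close>, and Bessel's inequality for the rows
  of \<open>L\<close> bounds \<open>\<Sum>\<^sub>i \<langle>E\<^sup>n\<^sub>K e\<^sub>i, e\<^sub>i\<rangle>\<close> by the trace of the section, which is the integral of
  \<open>E\<^sub>n(K)(x, x)\<close> over the first cells. Thus \<open>tr(E\<^sup>n\<^sub>K) \<le> \<integral> E\<^sub>n(K)(x, x) d\<mu>\<close> for every \<open>n\<close>.
\<close>

section \<open>Positive semidefinite quadratic forms\<close>

definition quad_form :: "nat \<Rightarrow> (nat \<Rightarrow> nat \<Rightarrow> real) \<Rightarrow> (nat \<Rightarrow> real) \<Rightarrow> real" where
  "quad_form N k v = (\<Sum>j<N. \<Sum>l<N. k j l * v j * v l)"

lemma quad_form_Suc: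
  "quad_form (Suc N) k v =
     quad_form N k v + v N * (\<Sum>j<N. (k j N + k N j) * v j) + k N N * (v N)\<^sup>2"
  by (simp add: quad_form_def sum.distrib sum_distrib_left sum_distrib_right algebra_simps
      power2_eq_square)

lemma quad_form_cong: "(\<And>j. j < N \<Longrightarrow> v j = w j) \<Longrightarrow> quad_form N k v = quad_form N k w"
  unfolding quad_form_def by (intro sum.cong refl) auto

lemma quad_form_unit_vector:
  "j < N \<Longrightarrow> quad_form N k (\<lambda>i. if i = j then 1 else 0) = k j j"
  unfolding quad_form_def by (simp add: if_distrib[of "\<lambda>x. _ * x"] cong: if_cong)

lemma nonneg_quadratic_discriminant:
  fixes c s q :: real
  assumes "0 \<le> q" and nonneg: "\<And>t. 0 \<le> c + s * t + q * t\<^sup>2"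
  shows "s\<^sup>2 \<le> 4 * q * c"
proof (cases "q = 0")
  case True
  have "s = 0"
  proof (rule ccontr)
    assume "s \<noteq> 0"
    then show False using nonneg[of "- (c + 1) / s"] True by simp
  qed
  then show ?thesis using True by simp
next
  case False
  with \<open>0 \<le> q\<close> have "0 < q" by simp
  have "0 \<le> c + s * (- s / (2 * q)) + q * (- s / (2 * q))\<^sup>2" by (rule nonneg)
  also have "\<dots> = (4 * q * c - s\<^sup>2) / (4 * q)"
    using \<open>0 < q\<close> by (simp add: field_simps power2_eq_square)
  finally show ?thesis using \<open>0 < q\<close> by (simp add: zero_le_divide_iff)
qed

text \<open>For \<open>q = 0\<close> both sides vanish, since then \<open>s = 0\<close> and \<open>x / 0 = 0\<close>.\<close>
lemma complete_the_square:
  fixes s q t :: real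
  assumes "0 \<le> q" and "q = 0 \<Longrightarrow> s = 0"
  shows "s * t + q * t\<^sup>2 = (s / (2 * sqrt q) + sqrt q * t)\<^sup>2 - s\<^sup>2 / (4 * q)"
proof (cases "q = 0")
  case False
  with assms have "0 < q" by simp
  have "(s / (2 * r) + r * t)\<^sup>2 = s\<^sup>2 / (4 * r\<^sup>2) + s * t + r\<^sup>2 * t\<^sup>2" if "0 < r" for r
    using that by (simp add: power2_eq_square field_simps)
  from this[of "sqrt q"] show ?thesis using \<open>0 < q\<close> by simp
qed (use assms in simp)

text \<open>One step of a Cholesky decomposition: complete the square in the last variable.\<close>
lemma psd_quad_form_Suc_split:
  assumes psd: "\<And>v. 0 \<le> quad_form (Suc N) k v"
  obtains k' a where "\<And>v. 0 \<le> quad_form N k' v"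
    and "\<And>v. quad_form (Suc N) k v = quad_form N k' v + (\<Sum>j<Suc N. a j * v j)\<^sup>2"
proof
  define b where "b j = k j N + k N j" for j
  define s where "s v = (\<Sum>j<N. b j * v j)" for v
  define q where "q = k N N"
  have split: "quad_form (Suc N) k v = quad_form N k v + s v * v N + q * (v N)\<^sup>2" for v
    unfolding quad_form_Suc s_def b_def q_def by (simp add: ac_simps)
  have nonneg: "0 \<le> quad_form N k v + s v * t + q * t\<^sup>2" for v t
  proof -
    have "quad_form N k (v(N := t)) = quad_form N k v" by (rule quad_form_cong) simp
    moreover have "s (v(N := t)) = s v" unfolding s_def by (intro sum.cong) auto
    ultimately show ?thesis using psd[of "v(N := t)"] unfolding split by simp
  qed
  have "0 \<le> q" using nonneg[of "\<lambda>_. 0" 1] by (simp add: s_def quad_form_def)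
  have disc: "(s v)\<^sup>2 \<le> 4 * q * quad_form N k v" for v
    using nonneg_quadratic_discriminant[OF \<open>0 \<le> q\<close> nonneg] .
  define k' where "k' j l = k j l - b j * b l / (4 * q)" for j l
  have k': "quad_form N k' v = quad_form N k v - (s v)\<^sup>2 / (4 * q)" for v
    unfolding k'_def quad_form_def s_def
    by (simp add: sum_subtractf left_diff_distrib power2_eq_square sum_distrib_left
        sum_distrib_right sum_divide_distrib algebra_simps)
  show "0 \<le> quad_form N k' v" for v
  proof (cases "q = 0")
    case True
    then show ?thesis using nonneg[of v 0] by (simp add: k')
  next
    case False
    then show ?thesis using disc[of v] \<open>0 \<le> q\<close> by (simp add: k' field_simps)
  qed
  define a where "a j = (if j < N then b j / (2 * sqrt q) else sqrt q)" for j
  show "quad_form (Suc N) k v = quad_form N k' v + (\<Sum>j<Suc N. a j * v j)\<^sup>2" for v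
  proof -
    have "q = 0 \<Longrightarrow> s v = 0" using disc[of v] by simp
    then have "s v * v N + q * (v N)\<^sup>2 = (s v / (2 * sqrt q) + sqrt q * v N)\<^sup>2 - (s v)\<^sup>2 / (4 * q)"
      by (rule complete_the_square[OF \<open>0 \<le> q\<close>])
    moreover have "(\<Sum>j<Suc N. a j * v j) = s v / (2 * sqrt q) + sqrt q * v N"
      by (simp add: a_def s_def sum_divide_distrib)
    ultimately show ?thesis unfolding split k' by simp
  qed
qed

lemma psd_quad_form_sum_of_squares:
  assumes "\<And>v. 0 \<le> quad_form N k v"
  shows "\<exists>L. \<forall>v. quad_form N k v = (\<Sum>r<N. (\<Sum>j<N. L r j * v j)\<^sup>2)"
  using assms
proof (induction N arbitrary: k)
  case 0
  then show ?case by (simp add: quad_form_def)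
next
  case (Suc N)
  obtain k' a where psd': "\<And>v. 0 \<le> quad_form N k' v"
    and split: "\<And>v. quad_form (Suc N) k v = quad_form N k' v + (\<Sum>j<Suc N. a j * v j)\<^sup>2"
    using psd_quad_form_Suc_split[OF Suc.prems] by blast
  obtain L where L: "\<forall>v. quad_form N k' v = (\<Sum>r<N. (\<Sum>j<N. L r j * v j)\<^sup>2)"
    using Suc.IH[OF psd'] by blast
  define L' where "L' r j = (if r < N then if j < N then L r j else 0 else a j)" for r j
  have "quad_form (Suc N) k v = (\<Sum>r<Suc N. (\<Sum>j<Suc N. L' r j * v j)\<^sup>2)" for v
    using split L by (simp add: L'_def)
  then show ?case by blast
qed

lemma psd_quad_form_trace_bound:
  assumes psd: "\<And>v. 0 \<le> quad_form N k v"
    and bessel: "\<And>v. (\<Sum>i<m. (\<Sum>j<N. v j * w i j)\<^sup>2) \<le> (\<Sum>j<N. (v j)\<^sup>2)"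
  shows "(\<Sum>i<m. quad_form N k (w i)) \<le> (\<Sum>j<N. k j j)"
proof -
  obtain L where L: "\<forall>v. quad_form N k v = (\<Sum>r<N. (\<Sum>j<N. L r j * v j)\<^sup>2)"
    using psd_quad_form_sum_of_squares[OF psd] by blast
  have diag: "k j j = (\<Sum>r<N. (L r j)\<^sup>2)" if "j < N" for j
    using L quad_form_unit_vector[OF that, of k] that
    by (simp add: if_distrib[of "\<lambda>x. _ * x"] cong: if_cong)
  have "(\<Sum>i<m. quad_form N k (w i)) = (\<Sum>r<N. \<Sum>i<m. (\<Sum>j<N. L r j * w i j)\<^sup>2)"
    using L by (simp add: sum.swap[of _ "{..<m}"])
  also have "\<dots> \<le> (\<Sum>r<N. \<Sum>j<N. (L r j)\<^sup>2)"
    by (intro sum_mono bessel)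
  also have "\<dots> = (\<Sum>j<N. k j j)"
    using diag by (subst sum.swap) simp
  finally show ?thesis .
qed

section \<open>Square-integrable functions and product integrals\<close>

lemma abs_mult_le_sum_squares:
  fixes a b :: real
  shows "\<bar>a * b\<bar> \<le> a\<^sup>2 + b\<^sup>2"
proof -
  have "2 * (\<bar>a\<bar> * \<bar>b\<bar>) \<le> a\<^sup>2 + b\<^sup>2"
    using sum_squares_bound[of "\<bar>a\<bar>" "\<bar>b\<bar>"] by (simp add: mult.assoc)
  moreover have "0 \<le> \<bar>a\<bar> * \<bar>b\<bar>" by simp
  ultimately show ?thesis unfolding abs_mult by linarith
qed

lemma L2_borel_measurable: "f \<in> L2 M \<Longrightarrow> f \<in> borel_measurable M"
  unfolding L2_def by simp

lemma L2_integrable_square: "f \<in> L2 M \<Longrightarrow> integrable M (\<lambda>x. (f x)\<^sup>2)"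
  unfolding L2_def by simp

lemma L2_integrable_mult:
  assumes "f \<in> L2 M" "g \<in> L2 M"
  shows "integrable M (\<lambda>x. f x * g x)"
proof (rule Bochner_Integration.integrable_bound)
  show "integrable M (\<lambda>x. (f x)\<^sup>2 + (g x)\<^sup>2)"
    using assms by (simp add: L2_integrable_square)
  show "AE x in M. norm (f x * g x) \<le> norm ((f x)\<^sup>2 + (g x)\<^sup>2)"
    using abs_mult_le_sum_squares by auto
qed (use assms in \<open>auto simp: L2_def\<close>)

lemma L2_indicator:
  assumes "A \<in> sets M" "emeasure M A < \<infinity>"
  shows "indicator A \<in> L2 M"
proof -
  have "(\<lambda>x. (indicator A x :: real)\<^sup>2) = indicator A" by (auto simp: indicator_def)
  then show ?thesis using assms by (simp add: L2_def)
qed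

lemma orthonormal_fam_L2: "orthonormal_fam M m e \<Longrightarrow> i < m \<Longrightarrow> e i \<in> L2 M"
  unfolding orthonormal_fam_def by simp

lemma bessel_inequality:
  assumes on: "orthonormal_fam M m e" and g: "g \<in> L2 M"
  shows "(\<Sum>i<m. (LINT x|M. e i x * g x)\<^sup>2) \<le> (LINT x|M. (g x)\<^sup>2)"
proof -
  define a where "a i = (LINT x|M. e i x * g x)" for i
  have ee: "(LINT x|M. e i x * e k x) = (if i = k then 1 else 0)" if "i < m" "k < m" for i k
    using on that unfolding orthonormal_fam_def by simp
  have int_ee: "integrable M (\<lambda>x. e i x * e k x)" if "i < m" "k < m" for i k
    using L2_integrable_mult orthonormal_fam_L2[OF on] that by blast
  have int_eg: "integrable M (\<lambda>x. e i x * g x)" if "i < m" for i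
    using L2_integrable_mult orthonormal_fam_L2[OF on that] g by blast
  have int_g: "integrable M (\<lambda>x. (g x)\<^sup>2)" using g by (rule L2_integrable_square)
  define lin where "lin x = (\<Sum>i<m. a i * (e i x * g x))" for x
  define quad where "quad x = (\<Sum>i<m. \<Sum>k<m. a i * a k * (e i x * e k x))" for x
  have int_lin: "integrable M lin"
    unfolding lin_def using int_eg by (auto intro!: Bochner_Integration.integrable_sum)
  have int_quad: "integrable M quad"
    unfolding quad_def using int_ee by (auto intro!: Bochner_Integration.integrable_sum)
  have lin: "(LINT x|M. lin x) = (\<Sum>i<m. a i * a i)"
    unfolding lin_def using int_eg by (subst Bochner_Integration.integral_sum) (auto simp: a_def)
  have quad: "(LINT x|M. quad x) = (\<Sum>i<m. a i * a i)"
  proof -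
    have "(LINT x|M. quad x) = (\<Sum>i<m. \<Sum>k<m. a i * a k * (LINT x|M. e i x * e k x))"
      unfolding quad_def using int_ee by (subst Bochner_Integration.integral_sum)
        (auto intro!: Bochner_Integration.integrable_sum sum.cong simp: Bochner_Integration.integral_sum)
    also have "\<dots> = (\<Sum>i<m. a i * a i)"
      by (simp add: ee if_distrib[of "\<lambda>x. _ * x"] cong: if_cong)
    finally show ?thesis .
  qed
  have "0 \<le> (LINT x|M. (g x - (\<Sum>i<m. a i * e i x))\<^sup>2)" by simp
  also have "\<dots> = (LINT x|M. (g x)\<^sup>2 - 2 * lin x + quad x)"
    unfolding lin_def quad_def
    by (simp add: power2_diff power2_eq_square sum_distrib_left sum_distrib_right sum_product
        algebra_simps)
  also have "\<dots> = (LINT x|M. (g x)\<^sup>2) - 2 * (LINT x|M. lin x) + (LINT x|M. quad x)"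
    using int_g int_lin int_quad by simp
  also have "\<dots> = (LINT x|M. (g x)\<^sup>2) - (\<Sum>i<m. a i * a i)"
    unfolding lin quad by simp
  finally show ?thesis by (simp add: a_def power2_eq_square)
qed

lemma (in pair_sigma_finite)
  fixes f g :: "_ \<Rightarrow> real"
  assumes f: "integrable M1 f" and g: "integrable M2 g"
  shows integrable_fst_snd_mult: "integrable (M1 \<Otimes>\<^sub>M M2) (\<lambda>p. f (fst p) * g (snd p))"
    and integral_fst_snd_mult:
      "(LINT p|(M1 \<Otimes>\<^sub>M M2). f (fst p) * g (snd p)) = (LINT x|M1. f x) * (LINT y|M2. g y)"
proof -
  have [measurable]: "f \<in> borel_measurable M1" "g \<in> borel_measurable M2" using f g by auto
  have "(\<integral>\<^sup>+p. ennreal (norm (f (fst p) * g (snd p))) \<partial>(M1 \<Otimes>\<^sub>M M2))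
      = (\<integral>\<^sup>+x. \<integral>\<^sup>+y. ennreal (norm (f x)) * ennreal (norm (g y)) \<partial>M2 \<partial>M1)"
    using M2.nn_integral_fst[where f="\<lambda>p. ennreal (norm (f (fst p) * g (snd p)))"]
    by (simp add: abs_mult ennreal_mult)
  also have "\<dots> = (\<integral>\<^sup>+x. ennreal (norm (f x)) \<partial>M1) * (\<integral>\<^sup>+y. ennreal (norm (g y)) \<partial>M2)"
    by (simp add: nn_integral_cmult nn_integral_multc)
  also have "\<dots> < \<infinity>"
    using f g unfolding integrable_iff_bounded by (simp add: ennreal_mult_less_top)
  finally show int: "integrable (M1 \<Otimes>\<^sub>M M2) (\<lambda>p. f (fst p) * g (snd p))"
    unfolding integrable_iff_bounded by simp
  show "(LINT p|(M1 \<Otimes>\<^sub>M M2). f (fst p) * g (snd p)) = (LINT x|M1. f x) * (LINT y|M2. g y)"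
    using integral_fst[of "\<lambda>x y. f x * g y"] int by (simp add: split_beta')
qed

section \<open>The partitions \<open>P\<^sub>n\<close>\<close>

lemma closure_UN_lessThan: "closure (\<Union>j<(k::nat). S j) = (\<Union>j<k. closure (S j))"
  by (induct k) (auto simp: lessThan_Suc)

lemma partitionP_countable: "countable (partitionP A U n)"
  by (induct n) auto

lemma partitionP_0_cases:
  "B \<in> partitionP A U 0 \<Longrightarrow> \<exists>k. \<exists>S\<in>{A k, frontier (A k)}. B = S - closure (\<Union>j<k. A j)"
  by auto

lemma partitionP_Suc_cases:
  "B \<in> partitionP A U (Suc n) \<Longrightarrow>
     \<exists>C\<in>partitionP A U n. \<exists>S\<in>{U n, UNIV - closure (U n), frontier (U n)}. B = S \<inter> C"
  by auto

lemma partitionP_sets_borel: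
  assumes "\<And>k. open (A k)" "\<And>n. open (U n)"
  shows "B \<in> partitionP A U n \<Longrightarrow> B \<in> sets borel"
proof (induct n arbitrary: B)
  case 0
  then obtain k S where "S \<in> {A k, frontier (A k)}" "B = S - closure (\<Union>j<k. A j)"
    by (auto dest: partitionP_0_cases)
  moreover have "A k \<in> sets borel" "frontier (A k) \<in> sets borel" "closure X \<in> sets borel" for X
    using assms(1) by (auto intro: borel_open borel_closed)
  ultimately show ?case by auto
next
  case (Suc n)
  then obtain C S where "C \<in> partitionP A U n" "S \<in> {U n, UNIV - closure (U n), frontier (U n)}"
    "B = S \<inter> C"
    by (auto dest: partitionP_Suc_cases)
  moreover have "U n \<in> sets borel" "UNIV - closure (U n) \<in> sets borel" "frontier (U n) \<in> sets borel"
    using assms(2) by (auto intro: borel_open borel_closed)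
  ultimately show ?case using Suc.hyps by auto
qed

lemma partitionP_0_index:
  fixes k :: nat
  assumes "S \<in> {A k, frontier (A k)}" "x \<in> S - closure (\<Union>j<k. A j)"
  shows "(LEAST k. x \<in> closure (A k)) = k"
proof (rule Least_equality)
  show "x \<in> closure (A k)"
    using assms closure_subset[of "A k"] by (auto simp: frontier_def)
  show "k \<le> j" if "x \<in> closure (A j)" for j
    using assms that by (auto simp: closure_UN_lessThan not_less[symmetric])
qed

lemma partitionP_covers:
  assumes "\<And>k. open (A k)" "(\<Union>k. A k) = UNIV" "\<And>n. open (U n)"
  shows "\<exists>B\<in>partitionP A U n. x \<in> B"
proof (induct n)
  case 0
  define k where "k = (LEAST k. x \<in> closure (A k))"
  have "\<exists>k. x \<in> closure (A k)" using assms(2) closure_subset by blast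
  then have "x \<in> closure (A k)" unfolding k_def by (rule LeastI_ex)
  then have "x \<in> A k \<or> x \<in> frontier (A k)"
    using assms(1) by (auto simp: frontier_def interior_open)
  moreover have "x \<notin> closure (\<Union>j<k. A j)"
    unfolding k_def by (auto simp: closure_UN_lessThan dest: not_less_Least)
  moreover have "A k - closure (\<Union>j<k. A j) \<in> partitionP A U 0"
    and "frontier (A k) - closure (\<Union>j<k. A j) \<in> partitionP A U 0"
    by simp_all
  ultimately show ?case by blast
next
  case (Suc n)
  then obtain B where "B \<in> partitionP A U n" "x \<in> B" by auto
  moreover have "x \<in> U n \<or> x \<in> UNIV - closure (U n) \<or> x \<in> frontier (U n)"
    using assms(3) by (auto simp: frontier_def interior_open)
  ultimately show ?case by auto
qed

lemma partitionP_disjoint: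
  assumes "\<And>k. open (A k)" "\<And>n. open (U n)"
  shows "B \<in> partitionP A U n \<Longrightarrow> B' \<in> partitionP A U n \<Longrightarrow> x \<in> B \<Longrightarrow> x \<in> B' \<Longrightarrow> B = B'"
proof (induct n arbitrary: B B')
  case 0
  obtain k S where S: "S \<in> {A k, frontier (A k)}" "B = S - closure (\<Union>j<k. A j)"
    using partitionP_0_cases[OF 0(1)] by blast
  obtain k' S' where S': "S' \<in> {A k', frontier (A k')}" "B' = S' - closure (\<Union>j<k'. A j)"
    using partitionP_0_cases[OF 0(2)] by blast
  have "(LEAST k. x \<in> closure (A k)) = k" using S 0 by (intro partitionP_0_index[of S]) auto
  moreover have "(LEAST k. x \<in> closure (A k)) = k'" using S' 0 by (intro partitionP_0_index[of S']) auto
  ultimately have "k = k'" by simp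
  moreover have "A k \<inter> frontier (A k) = {}"
    using assms(1) by (auto simp: frontier_def interior_open)
  ultimately show ?case using S S' 0 \<open>k = k'\<close> by auto
next
  case (Suc n)
  obtain C S where C: "C \<in> partitionP A U n" "S \<in> {U n, UNIV - closure (U n), frontier (U n)}"
    "B = S \<inter> C"
    using partitionP_Suc_cases[OF Suc(2)] by blast
  obtain C' S' where C': "C' \<in> partitionP A U n"
    "S' \<in> {U n, UNIV - closure (U n), frontier (U n)}" "B' = S' \<inter> C'"
    using partitionP_Suc_cases[OF Suc(3)] by blast
  have "C = C'" using Suc.hyps[OF C(1) C'(1)] Suc.prems C C' by auto
  moreover have "S = S'"
    using C C' Suc.prems assms(2) closure_subset[of "U n"] by (auto simp: frontier_def interior_open)
  ultimately show ?case using C C' by simp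
qed

lemma cellO:
  assumes "\<And>k. open (A k)" "(\<Union>k. A k) = UNIV" "\<And>n. open (U n)"
  shows "cellO A U n x \<in> partitionP A U n" and "x \<in> cellO A U n x"
proof -
  have "\<exists>!B. B \<in> partitionP A U n \<and> x \<in> B"
    using partitionP_covers[of A U, OF assms] partitionP_disjoint[of A U, OF assms(1,3)] by blast
  then have "cellO A U n x \<in> partitionP A U n \<and> x \<in> cellO A U n x"
    unfolding cellO_def by (rule theI')
  then show "cellO A U n x \<in> partitionP A U n" "x \<in> cellO A U n x" by simp_all
qed

lemma cellO_eq:
  assumes "\<And>k. open (A k)" "(\<Union>k. A k) = UNIV" "\<And>n. open (U n)"
    and "B \<in> partitionP A U n" "x \<in> B"
  shows "cellO A U n x = B"
  using partitionP_disjoint[of A U, OF assms(1,3)] cellO[of A U, OF assms(1-3)] assms(4,5) by blast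

lemma partitionP_subset_closure: "B \<in> partitionP A U n \<Longrightarrow> \<exists>k. B \<subseteq> closure (A k)"
proof (induct n arbitrary: B)
  case 0
  then obtain k S where "S \<in> {A k, frontier (A k)}" "B = S - closure (\<Union>j<k. A j)"
    by (auto dest: partitionP_0_cases)
  then have "B \<subseteq> closure (A k)" using closure_subset[of "A k"] by (auto simp: frontier_def)
  then show ?case ..
next
  case (Suc n)
  then obtain C where "C \<in> partitionP A U n" "B \<subseteq> C" by auto
  then show ?case using Suc.hyps by blast
qed

lemma countable_partition_enumeration:
  assumes "countable P" "P \<noteq> {}" "\<Union>P = UNIV"
    and disj: "\<And>B B' x. B \<in> P \<Longrightarrow> B' \<in> P \<Longrightarrow> x \<in> B \<Longrightarrow> x \<in> B' \<Longrightarrow> B = B'"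
  obtains c :: "nat \<Rightarrow> 'a set"
  where "disjoint_family c" "(\<Union>j. c j) = UNIV" "range c \<subseteq> insert {} P"
proof
  define f where "f = from_nat_into P"
  have range_f: "range f = P"
    unfolding f_def using assms(2,1) by (rule range_from_nat_into)
  show "disjoint_family (disjointed f)" by (rule disjoint_family_disjointed)
  show "(\<Union>j. disjointed f j) = UNIV" using assms(3) by (simp add: UN_disjointed_eq range_f)
  have nonempty_cell: "disjointed f j = f j" if ne: "disjointed f j \<noteq> {}" for j
  proof -
    obtain x where x: "x \<in> disjointed f j" using ne by auto
    have "f i \<inter> f j = {}" if "i < j" for i
    proof (rule ccontr)
      assume "f i \<inter> f j \<noteq> {}"
      then have "f i = f j" using disj range_f by blast
      then show False using x that by (auto simp: disjointed_def)
    qed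
    then show ?thesis by (auto simp: disjointed_def disjoint_iff)
  qed
  show "range (disjointed f) \<subseteq> insert {} P"
  proof
    fix B assume "B \<in> range (disjointed f)"
    then obtain j where "B = disjointed f j" by auto
    then show "B \<in> insert {} P" using nonempty_cell[of j] range_f by (cases "B = {}") auto
  qed
qed

lemma emeasure_compact_finite_if_locally_finite:
  fixes M :: "'a::topological_space measure"
  assumes sets_M: "sets M = sets borel"
    and locfin: "\<And>x. \<exists>S. open S \<and> x \<in> S \<and> emeasure M S < \<infinity>"
    and "compact C"
  shows "emeasure M C < \<infinity>"
proof -
  let ?T = "{S. open S \<and> emeasure M S < \<infinity>}"
  have "C \<subseteq> \<Union>?T" using locfin by blast
  then obtain T where T: "T \<subseteq> ?T" "finite T" "C \<subseteq> \<Union>T"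
    using compactE[OF \<open>compact C\<close>] by blast
  have sets_T: "T \<subseteq> sets M" using T(1) sets_M by (auto intro: borel_open)
  have "emeasure M C \<le> emeasure M (\<Union>S\<in>T. S)"
    using T sets_T by (intro emeasure_mono) (auto intro!: sets.finite_UN)
  also have "\<dots> \<le> (\<Sum>S\<in>T. emeasure M S)"
    using T sets_T by (intro emeasure_subadditive_finite) auto
  also have "\<dots> < \<infinity>" using T by (auto simp: sum_Pinfty less_top)
  finally show ?thesis .
qed

lemma partitionP_emeasure_finite:
  fixes M :: "'a::t2_space measure"
  assumes sets_M: "sets M = sets borel"
    and locfin: "\<And>x. \<exists>S. open S \<and> x \<in> S \<and> emeasure M S < \<infinity>"
    and A_int: "\<And>k. \<exists>C. compact C \<and> A k = interior C"
    and "B \<in> partitionP A U n"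
  shows "emeasure M B < \<infinity>"
proof -
  obtain k where "B \<subseteq> closure (A k)" using partitionP_subset_closure[OF \<open>B \<in> _\<close>] ..
  moreover obtain C where C: "compact C" "A k = interior C" using A_int by blast
  moreover have "closure (interior C) \<subseteq> C"
    using interior_subset compact_imp_closed[OF C(1)] by (rule closure_minimal)
  ultimately have "B \<subseteq> C" by auto
  moreover have "C \<in> sets M" using C(1) sets_M by (auto intro: borel_closed compact_imp_closed)
  ultimately have "emeasure M B \<le> emeasure M C" by (rule emeasure_mono)
  also have "\<dots> < \<infinity>" by (rule emeasure_compact_finite_if_locally_finite[OF sets_M locfin C(1)])
  finally show ?thesis .
qed

lemma nullpts_null_sets:
  assumes sets_M: "sets M = sets borel"
    and A_open: "\<And>k. open (A k)" and A_cover: "(\<Union>k. A k) = UNIV" and U_open: "\<And>n. open (U n)"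
  shows "nullpts M A U \<in> null_sets M"
proof -
  have "nullpts M A U = (\<Union>m. \<Union>B\<in>{B\<in>partitionP A U m. emeasure M B = 0}. B)"
    using cellO[of A U, OF A_open A_cover U_open] cellO_eq[of A U, OF A_open A_cover U_open]
    unfolding nullpts_def by blast
  also have "\<dots> \<in> null_sets M"
    using partitionP_sets_borel[of A U, OF A_open U_open] sets_M
    by (intro null_sets_UN null_sets_UN' countable_subset[OF _ partitionP_countable])
      (auto simp: null_sets_def)
  finally show ?thesis .
qed

section \<open>Kernels averaged over a countable partition\<close>

lemma sum_lessThan_delta: "(\<Sum>j<(N::nat). if j = a then f j else 0) = (if a < N then f a else 0)"
  by (induct N) auto

lemma divide_mult_sqrt_split:
  fixes a b k x y :: real
  assumes "0 \<le> a" "0 \<le> b"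
  shows "k / (a * b) * x * y = k / sqrt (a * b) * (x / sqrt a) * (y / sqrt b)"
proof (cases "a = 0 \<or> b = 0")
  case False
  with assms have "0 < a" "0 < b" by auto
  then show ?thesis by (simp add: real_sqrt_mult field_simps)
qed auto

lemma LIMSEQ_le_ennreal_bound:
  fixes X :: "nat \<Rightarrow> real"
  assumes "X \<longlonglongrightarrow> L" and bound: "\<And>N. ennreal (X N) \<le> B"
  shows "ereal L \<le> enn2ereal B"
proof (cases B)
  case (real r)
  have "X N \<le> r" for N
    using bound[of N] \<open>0 \<le> r\<close> unfolding real by (cases "0 \<le> X N") (auto simp: ennreal_le_iff)
  then have "L \<le> r" by (intro LIMSEQ_le_const2[OF \<open>X \<longlonglongrightarrow> L\<close>]) auto
  then show ?thesis using real by simp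
qed simp

locale cell_partition =
  fixes M :: "'a measure" and c :: "nat \<Rightarrow> 'a set"
  assumes space_M: "space M = UNIV"
    and sets_cell[measurable]: "\<And>j. c j \<in> sets M"
    and emeasure_cell_finite: "\<And>j. emeasure M (c j) < \<infinity>"
    and disjoint_cells: "disjoint_family c"
    and cells_cover: "(\<Union>j. c j) = UNIV"
begin

sublocale sigma_finite_measure M
proof
  show "\<exists>A. countable A \<and> A \<subseteq> sets M \<and> \<Union>A = space M \<and> (\<forall>a\<in>A. emeasure M a \<noteq> \<infinity>)"
    using emeasure_cell_finite cells_cover space_M
    by (intro exI[of _ "range c"]) (auto simp: less_top)
qed

sublocale P: pair_sigma_finite M M ..

definition cell_index :: "'a \<Rightarrow> nat" where
  "cell_index x = (THE j. x \<in> c j)"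

lemma cell_index_eq: "x \<in> c j \<Longrightarrow> cell_index x = j"
  unfolding cell_index_def using disjoint_cells
  by (auto simp: disjoint_family_on_def intro!: the_equality)

lemma in_cell_index: "x \<in> c (cell_index x)"
proof -
  obtain j where "x \<in> c j" using cells_cover by auto
  then show ?thesis by (simp add: cell_index_eq)
qed

lemma indicator_cell: "indicator (c j) x = (if j = cell_index x then 1 else 0)"
  using in_cell_index cell_index_eq by (auto simp: indicator_def)

lemma measurable_cell_index[measurable]: "cell_index \<in> measurable M (count_space UNIV)"
proof -
  have "cell_index -` {j} \<inter> space M = c j" for j
    using in_cell_index cell_index_eq by (auto simp: space_M)
  then show ?thesis by (auto simp: measurable_count_space_eq2_countable space_M)
qed

definition vol :: "nat \<Rightarrow> real" where
  "vol j = measure M (c j)"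

lemma emeasure_cell: "emeasure M (c j) = ennreal (vol j)"
  using emeasure_cell_finite[of j] unfolding vol_def by (simp add: emeasure_eq_ennreal_measure)

lemma vol_nonneg: "0 \<le> vol j"
  unfolding vol_def by simp

lemma emeasure_cell_rect: "emeasure (M \<Otimes>\<^sub>M M) (c j \<times> c l) = ennreal (vol j * vol l)"
  by (simp add: emeasure_pair_measure_Times emeasure_cell ennreal_mult vol_nonneg)

lemma L2_indicator_cell: "indicator (c j) \<in> L2 M"
  by (rule L2_indicator) (simp_all add: emeasure_cell)

lemma sum_indicator_cell_rect:
  "(\<Sum>j<N. \<Sum>l<N. indicator (c j \<times> c l) p :: real) =
     (if cell_index (fst p) < N \<and> cell_index (snd p) < N then 1 else 0)"
proof -
  have "(\<Sum>j<N. \<Sum>l<N. indicator (c j \<times> c l) p :: real) =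
      (\<Sum>j<N. if j = cell_index (fst p) then \<Sum>l<N. if l = cell_index (snd p) then 1 else 0 else 0)"
    by (intro sum.cong refl) (simp add: indicator_times split_beta' indicator_cell)
  then show ?thesis by (simp add: sum_lessThan_delta)
qed

lemma nn_integral_cell_rects:
  assumes [measurable]: "f \<in> borel_measurable (M \<Otimes>\<^sub>M M)"
  shows "(\<integral>\<^sup>+p. f p \<partial>(M \<Otimes>\<^sub>M M)) =
    (\<Sum>j. \<Sum>l. \<integral>\<^sup>+p. indicator (c j \<times> c l) p * f p \<partial>(M \<Otimes>\<^sub>M M))"
proof -
  have one: "(\<Sum>j. indicator (c j) x :: ennreal) = 1" for x
    using cells_cover by (simp add: suminf_indicator[OF disjoint_cells])
  have "f p = (\<Sum>j. \<Sum>l. indicator (c j \<times> c l) p * f p)" for p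
    by (simp add: indicator_times ennreal_suminf_multc one mult.assoc
        ennreal_suminf_cmult[symmetric])
  then have "(\<integral>\<^sup>+p. f p \<partial>(M \<Otimes>\<^sub>M M)) =
      (\<integral>\<^sup>+p. (\<Sum>j. \<Sum>l. indicator (c j \<times> c l) p * f p) \<partial>(M \<Otimes>\<^sub>M M))"
    by simp
  also have "\<dots> = (\<Sum>j. \<integral>\<^sup>+p. (\<Sum>l. indicator (c j \<times> c l) p * f p) \<partial>(M \<Otimes>\<^sub>M M))"
    by (rule nn_integral_suminf) measurable
  also have "\<dots> = (\<Sum>j. \<Sum>l. \<integral>\<^sup>+p. indicator (c j \<times> c l) p * f p \<partial>(M \<Otimes>\<^sub>M M))"
    by (intro suminf_cong nn_integral_suminf) measurable
  finally show ?thesis .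
qed

definition coeff :: "('a \<Rightarrow> real) \<Rightarrow> nat \<Rightarrow> real" where
  "coeff e j = (LINT x|M. indicator (c j) x * e x) / sqrt (vol j)"

definition step_fun :: "nat \<Rightarrow> (nat \<Rightarrow> real) \<Rightarrow> 'a \<Rightarrow> real" where
  "step_fun N v x = (\<Sum>j<N. v j / sqrt (vol j) * indicator (c j) x)"

lemma measurable_step_fun[measurable]: "step_fun N v \<in> borel_measurable M"
  unfolding step_fun_def by measurable

lemma step_fun_square: "(step_fun N v x)\<^sup>2 = (\<Sum>j<N. (v j)\<^sup>2 / vol j * indicator (c j) x)"
  using vol_nonneg[of "cell_index x"]
  by (simp add: step_fun_def indicator_cell sum_lessThan_delta power_divide
      if_distrib[of "\<lambda>x. _ * x"] cong: if_cong)

text \<open>Only an inequality, as a null cell contributes \<open>(v j)\<^sup>2 / 0 * 0 = 0\<close>.\<close>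
lemma step_fun_L2: "step_fun N v \<in> L2 M"
  and step_fun_norm_le: "(LINT x|M. (step_fun N v x)\<^sup>2) \<le> (\<Sum>j<N. (v j)\<^sup>2)"
proof -
  have int: "integrable M (indicator (c j) :: 'a \<Rightarrow> real)" for j
    by (simp add: emeasure_cell)
  then show "step_fun N v \<in> L2 M"
    by (auto simp: L2_def step_fun_square intro!: Bochner_Integration.integrable_sum integrable_mult_right)
  have "(LINT x|M. (step_fun N v x)\<^sup>2) = (\<Sum>j<N. (v j)\<^sup>2 / vol j * vol j)"
    unfolding step_fun_square using int
    by (subst Bochner_Integration.integral_sum) (auto simp: vol_def)
  also have "\<dots> \<le> (\<Sum>j<N. (v j)\<^sup>2)"
    by (intro sum_mono) (simp add: vol_nonneg)
  finally show "(LINT x|M. (step_fun N v x)\<^sup>2) \<le> (\<Sum>j<N. (v j)\<^sup>2)" .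
qed

lemma integral_mult_step_fun:
  assumes "e \<in> L2 M"
  shows "(LINT x|M. e x * step_fun N v x) = (\<Sum>j<N. v j * coeff e j)"
proof -
  have int: "integrable M (\<lambda>x. indicator (c j) x * e x)" for j
    using L2_integrable_mult[OF L2_indicator_cell assms] .
  have "(LINT x|M. e x * step_fun N v x) =
      (LINT x|M. (\<Sum>j<N. v j / sqrt (vol j) * (indicator (c j) x * e x)))"
    unfolding step_fun_def by (simp add: sum_distrib_left ac_simps)
  also have "\<dots> = (\<Sum>j<N. v j * coeff e j)"
    unfolding coeff_def using int by (subst Bochner_Integration.integral_sum) auto
  finally show ?thesis .
qed

lemma bessel_coeff:
  assumes "orthonormal_fam M m e"
  shows "(\<Sum>i<m. (\<Sum>j<N. v j * coeff (e i) j)\<^sup>2) \<le> (\<Sum>j<N. (v j)\<^sup>2)"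
proof -
  have "(\<Sum>i<m. (\<Sum>j<N. v j * coeff (e i) j)\<^sup>2) = (\<Sum>i<m. (LINT x|M. e i x * step_fun N v x)\<^sup>2)"
    using orthonormal_fam_L2[OF assms] by (simp add: integral_mult_step_fun)
  also have "\<dots> \<le> (LINT x|M. (step_fun N v x)\<^sup>2)"
    by (rule bessel_inequality[OF assms step_fun_L2])
  also have "\<dots> \<le> (\<Sum>j<N. (v j)\<^sup>2)" by (rule step_fun_norm_le)
  finally show ?thesis .
qed

end

text \<open>\<open>Z\<close> plays the role of the null set \<open>\<frak>N\<close> on which \<open>E\<^sub>n(K)\<close> is set to \<open>0\<close>.\<close>
locale cell_kernel = cell_partition M c for M :: "'a measure" and c +
  fixes Z :: "'a set" and K :: "'a \<Rightarrow> 'a \<Rightarrow> real"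
  assumes null_Z: "Z \<in> null_sets M"
    and null_cell_subset: "\<And>j. measure M (c j) = 0 \<Longrightarrow> c j \<subseteq> Z"
    and K_measurable[measurable]: "(\<lambda>(x, y). K x y) \<in> borel_measurable (M \<Otimes>\<^sub>M M)"
    and K_square_integrable: "integrable (M \<Otimes>\<^sub>M M) (\<lambda>(x, y). (K x y)\<^sup>2)"
    and K_pos_def: "L2_pos_def_kernel M K"
begin

definition block :: "nat \<Rightarrow> nat \<Rightarrow> real" where
  "block j l = (LINT s:c j|M. (LINT t:c l|M. K s t))"

definition avg_kernel :: "'a \<Rightarrow> 'a \<Rightarrow> real" where
  "avg_kernel x y =
     (if x \<notin> Z \<and> y \<notin> Z
      then 1 / (vol (cell_index x) * vol (cell_index y)) * block (cell_index x) (cell_index y)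
      else 0)"

lemma avg_kernel_cells:
  "x \<in> c j \<Longrightarrow> y \<in> c l \<Longrightarrow> x \<notin> Z \<Longrightarrow> y \<notin> Z \<Longrightarrow> avg_kernel x y = block j l / (vol j * vol l)"
  by (simp add: avg_kernel_def cell_index_eq)

lemma avg_kernel_null_cell: "vol j = 0 \<Longrightarrow> x \<in> c j \<or> y \<in> c j \<Longrightarrow> avg_kernel x y = 0"
  using null_cell_subset[of j] by (auto simp: avg_kernel_def vol_def)

lemma sets_Z[measurable]: "Z \<in> sets M"
  using null_Z by (rule null_setsD2)

lemma measurable_avg_kernel[measurable]:
  "(\<lambda>p. avg_kernel (fst p) (snd p)) \<in> borel_measurable (M \<Otimes>\<^sub>M M)"
proof -
  define F where "F = (\<lambda>(j, l) (p :: 'a \<times> 'a).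
    if fst p \<notin> Z \<and> snd p \<notin> Z then 1 / (vol j * vol l) * block j l else 0)"
  have "(\<lambda>p. (cell_index (fst p), cell_index (snd p))) -` {(j, l)} \<inter> space (M \<Otimes>\<^sub>M M)
      = c j \<times> c l" for j l
    using in_cell_index cell_index_eq by (auto simp: space_pair_measure space_M)
  then have "(\<lambda>p. (cell_index (fst p), cell_index (snd p))) \<in> measurable (M \<Otimes>\<^sub>M M) (count_space UNIV)"
    by (auto simp: measurable_count_space_eq2_countable)
  then have "(\<lambda>p. F (cell_index (fst p), cell_index (snd p)) p) \<in> borel_measurable (M \<Otimes>\<^sub>M M)"
    by (rule measurable_compose_countable[rotated]) (auto simp: F_def)
  then show ?thesis by (simp add: F_def avg_kernel_def)
qed

lemma measurable_avg_kernel_diag[measurable]: "(\<lambda>x. avg_kernel x x) \<in> borel_measurable M"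
  using measurable_compose[OF measurable_Pair[OF measurable_ident measurable_ident] measurable_avg_kernel]
  by (simp add: space_M)

lemma AE_notin_Z: "AE x in M. x \<notin> Z"
  using null_Z by (rule AE_not_in)

lemma AE_pair_notin_Z: "AE p in M \<Otimes>\<^sub>M M. fst p \<notin> Z \<and> snd p \<notin> Z"
proof (rule AE_I')
  show "Z \<times> space M \<union> space M \<times> Z \<in> null_sets (M \<Otimes>\<^sub>M M)"
    using null_Z by (intro null_sets.Un P.times_in_null_sets1 P.times_in_null_sets2) auto
  show "{p \<in> space (M \<Otimes>\<^sub>M M). \<not> (fst p \<notin> Z \<and> snd p \<notin> Z)} \<subseteq> Z \<times> space M \<union> space M \<times> Z"
    by (auto simp: space_M)
qed

lemma integrable_K_square: "integrable (M \<Otimes>\<^sub>M M) (\<lambda>p. (K (fst p) (snd p))\<^sup>2)"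
  using K_square_integrable by (simp add: split_beta')

lemma integrable_K_cell_rect:
  "integrable (M \<Otimes>\<^sub>M M) (\<lambda>p. indicator (c j \<times> c l) p * K (fst p) (snd p))"
proof (rule Bochner_Integration.integrable_bound)
  show "integrable (M \<Otimes>\<^sub>M M) (\<lambda>p. indicator (c j \<times> c l) p + (K (fst p) (snd p))\<^sup>2 :: real)"
    using integrable_K_square emeasure_cell_rect
    by (intro Bochner_Integration.integrable_add integrable_real_indicator) auto
  show "AE p in M \<Otimes>\<^sub>M M. norm (indicator (c j \<times> c l) p * K (fst p) (snd p))
      \<le> norm (indicator (c j \<times> c l) p + (K (fst p) (snd p))\<^sup>2 :: real)"
    using abs_mult_le_sum_squares[of 1] by (auto simp: indicator_def)
qed measurable

lemma block_eq_pair_integral: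
  "block j l = (LINT p|(M \<Otimes>\<^sub>M M). indicator (c j \<times> c l) p * K (fst p) (snd p))"
proof -
  have "integrable (M \<Otimes>\<^sub>M M) (\<lambda>(s, t). indicator (c j) s * indicator (c l) t * K s t)"
    using integrable_K_cell_rect[of j l] by (simp add: split_beta' indicator_times mult.assoc)
  from P.integral_fst'[OF this] show ?thesis
    by (simp add: block_def set_lebesgue_integral_def split_beta' indicator_times mult.assoc)
qed

lemma block_square_le:
  "ennreal ((block j l)\<^sup>2) \<le> ennreal (vol j * vol l) *
     (\<integral>\<^sup>+p. indicator (c j \<times> c l) p * ennreal ((K (fst p) (snd p))\<^sup>2) \<partial>(M \<Otimes>\<^sub>M M))"
proof -
  define f where "f p = ennreal (indicator (c j \<times> c l) p * \<bar>K (fst p) (snd p)\<bar>)" for p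
  define g where "g p = (indicator (c j \<times> c l) p :: ennreal)" for p
  have [measurable]: "f \<in> borel_measurable (M \<Otimes>\<^sub>M M)" "g \<in> borel_measurable (M \<Otimes>\<^sub>M M)"
    unfolding f_def g_def by measurable
  have "ennreal \<bar>block j l\<bar>
      \<le> (\<integral>\<^sup>+p. norm (indicator (c j \<times> c l) p * K (fst p) (snd p)) \<partial>(M \<Otimes>\<^sub>M M))"
    unfolding block_eq_pair_integral using integral_norm_bound_ennreal[OF integrable_K_cell_rect]
    by simp
  also have "\<dots> = (\<integral>\<^sup>+p. f p * g p \<partial>(M \<Otimes>\<^sub>M M))"
    by (intro nn_integral_cong) (auto simp: f_def g_def indicator_def abs_mult)
  finally have "(ennreal \<bar>block j l\<bar>)\<^sup>2 \<le> (\<integral>\<^sup>+p. f p * g p \<partial>(M \<Otimes>\<^sub>M M))\<^sup>2"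
    by (intro power_mono) auto
  also have "\<dots> \<le> (\<integral>\<^sup>+p. f p ^ 2 \<partial>(M \<Otimes>\<^sub>M M)) * (\<integral>\<^sup>+p. g p ^ 2 \<partial>(M \<Otimes>\<^sub>M M))"
    by (rule Cauchy_Schwarz_nn_integral) measurable
  also have "(\<integral>\<^sup>+p. g p ^ 2 \<partial>(M \<Otimes>\<^sub>M M)) = (\<integral>\<^sup>+p. g p \<partial>(M \<Otimes>\<^sub>M M))"
    by (intro nn_integral_cong) (auto simp: g_def indicator_def)
  also have "\<dots> = ennreal (vol j * vol l)"
    by (simp add: g_def emeasure_cell_rect)
  also have "(\<integral>\<^sup>+p. f p ^ 2 \<partial>(M \<Otimes>\<^sub>M M)) =
      (\<integral>\<^sup>+p. indicator (c j \<times> c l) p * ennreal ((K (fst p) (snd p))\<^sup>2) \<partial>(M \<Otimes>\<^sub>M M))"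
    by (intro nn_integral_cong) (auto simp: f_def indicator_def ennreal_power)
  finally show ?thesis by (simp add: mult.commute ennreal_power)
qed

lemma avg_kernel_square_cell_rect_le:
  "(\<integral>\<^sup>+p. indicator (c j \<times> c l) p * ennreal ((avg_kernel (fst p) (snd p))\<^sup>2) \<partial>(M \<Otimes>\<^sub>M M))
   \<le> (\<integral>\<^sup>+p. indicator (c j \<times> c l) p * ennreal ((K (fst p) (snd p))\<^sup>2) \<partial>(M \<Otimes>\<^sub>M M))"
    (is "?L \<le> ?R")
proof (cases "vol j * vol l = 0")
  case True
  then have "?L = (\<integral>\<^sup>+p. 0 \<partial>(M \<Otimes>\<^sub>M M))"
    by (intro nn_integral_cong) (auto simp: indicator_def avg_kernel_null_cell)
  then show ?thesis by simp
next
  case False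
  define d where "d = vol j * vol l"
  have "0 < d" using False vol_nonneg[of j] vol_nonneg[of l] unfolding d_def
    by (simp add: zero_less_mult_iff less_le)
  have "?L \<le> (\<integral>\<^sup>+p. ennreal ((block j l / d)\<^sup>2) * indicator (c j \<times> c l) p \<partial>(M \<Otimes>\<^sub>M M))"
    by (intro nn_integral_mono) (auto simp: indicator_def avg_kernel_def cell_index_eq d_def)
  also have "\<dots> = ennreal ((block j l / d)\<^sup>2) * ennreal d"
    by (subst nn_integral_cmult_indicator) (auto simp: emeasure_cell_rect d_def)
  also have "\<dots> = ennreal ((block j l)\<^sup>2) * ennreal (1 / d)"
    using \<open>0 < d\<close> by (simp add: ennreal_mult[symmetric] power2_eq_square)
  also have "\<dots> \<le> ennreal d * ?R * ennreal (1 / d)"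
    using block_square_le[of j l] unfolding d_def by (intro mult_right_mono) auto
  also have "\<dots> = (ennreal d * ennreal (1 / d)) * ?R"
    by (simp only: mult.assoc mult.commute[of ?R])
  also have "ennreal d * ennreal (1 / d) = 1"
    using \<open>0 < d\<close> by (simp add: ennreal_mult[symmetric])
  finally show ?thesis by simp
qed

lemma integrable_avg_kernel_square:
  "integrable (M \<Otimes>\<^sub>M M) (\<lambda>p. (avg_kernel (fst p) (snd p))\<^sup>2)"
proof -
  have "(\<integral>\<^sup>+p. ennreal ((avg_kernel (fst p) (snd p))\<^sup>2) \<partial>(M \<Otimes>\<^sub>M M))
      \<le> (\<integral>\<^sup>+p. ennreal ((K (fst p) (snd p))\<^sup>2) \<partial>(M \<Otimes>\<^sub>M M))"
    by (subst (1 2) nn_integral_cell_rects) (auto intro!: suminf_le avg_kernel_square_cell_rect_le)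
  also have "\<dots> < \<infinity>"
    using integrable_K_square unfolding integrable_iff_bounded by simp
  finally show ?thesis unfolding integrable_iff_bounded by simp
qed

lemma integrable_avg_kernel_form:
  assumes "e \<in> L2 M"
  shows "integrable (M \<Otimes>\<^sub>M M) (\<lambda>p. avg_kernel (fst p) (snd p) * e (fst p) * e (snd p))"
proof (rule Bochner_Integration.integrable_bound)
  have [measurable]: "e \<in> borel_measurable M" using assms by (rule L2_borel_measurable)
  have e2: "integrable M (\<lambda>x. (e x)\<^sup>2)" using assms by (rule L2_integrable_square)
  show "integrable (M \<Otimes>\<^sub>M M)
      (\<lambda>p. (avg_kernel (fst p) (snd p))\<^sup>2 + (e (fst p))\<^sup>2 * (e (snd p))\<^sup>2)"
    using integrable_avg_kernel_square P.integrable_fst_snd_mult[OF e2 e2]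
    by (rule Bochner_Integration.integrable_add)
  show "(\<lambda>p. avg_kernel (fst p) (snd p) * e (fst p) * e (snd p)) \<in> borel_measurable (M \<Otimes>\<^sub>M M)"
    by measurable
  show "AE p in M \<Otimes>\<^sub>M M. norm (avg_kernel (fst p) (snd p) * e (fst p) * e (snd p))
      \<le> norm ((avg_kernel (fst p) (snd p))\<^sup>2 + (e (fst p))\<^sup>2 * (e (snd p))\<^sup>2)"
  proof (intro AE_I2)
    fix p
    show "norm (avg_kernel (fst p) (snd p) * e (fst p) * e (snd p))
      \<le> norm ((avg_kernel (fst p) (snd p))\<^sup>2 + (e (fst p))\<^sup>2 * (e (snd p))\<^sup>2)"
      using abs_mult_le_sum_squares[of "avg_kernel (fst p) (snd p)" "e (fst p) * e (snd p)"]
      by (simp add: mult.assoc power_mult_distrib)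
  qed
qed

lemma integral_intop_avg_kernel:
  assumes "e \<in> L2 M"
  shows "(LINT x|M. intop M avg_kernel e x * e x) =
    (LINT p|(M \<Otimes>\<^sub>M M). avg_kernel (fst p) (snd p) * e (fst p) * e (snd p))"
proof -
  have "integrable (M \<Otimes>\<^sub>M M) (\<lambda>(x, y). avg_kernel x y * e y * e x)"
    using integrable_avg_kernel_form[OF assms] by (simp add: split_beta' ac_simps)
  from P.integral_fst'[OF this] show ?thesis
    by (simp add: intop_def split_beta' ac_simps)
qed

text \<open>The matrix of the kernel in the orthonormal system of normalised cell indicators.\<close>
definition cell_matrix :: "nat \<Rightarrow> nat \<Rightarrow> real" where
  "cell_matrix j l = block j l / sqrt (vol j * vol l)"

lemma integral_avg_kernel_form_cell_rect:
  assumes "e \<in> L2 M"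
  shows "(LINT p|(M \<Otimes>\<^sub>M M). indicator (c j \<times> c l) p *
      (avg_kernel (fst p) (snd p) * e (fst p) * e (snd p))) = cell_matrix j l * coeff e j * coeff e l"
proof -
  have [measurable]: "e \<in> borel_measurable M" using assms by (rule L2_borel_measurable)
  have int: "integrable M (\<lambda>x. indicator (c i) x * e x)" for i
    by (rule L2_integrable_mult[OF L2_indicator_cell assms])
  have "(LINT p|(M \<Otimes>\<^sub>M M). indicator (c j \<times> c l) p *
      (avg_kernel (fst p) (snd p) * e (fst p) * e (snd p))) =
    (LINT p|(M \<Otimes>\<^sub>M M). block j l / (vol j * vol l) *
      ((indicator (c j) (fst p) * e (fst p)) * (indicator (c l) (snd p) * e (snd p))))"
  proof (rule integral_cong_AE)
    show "AE p in M \<Otimes>\<^sub>M M. indicator (c j \<times> c l) p *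
        (avg_kernel (fst p) (snd p) * e (fst p) * e (snd p)) = block j l / (vol j * vol l) *
        ((indicator (c j) (fst p) * e (fst p)) * (indicator (c l) (snd p) * e (snd p)))"
      using AE_pair_notin_Z
      by eventually_elim (auto simp: indicator_def avg_kernel_def cell_index_eq split_beta')
  qed measurable
  also have "\<dots> = block j l / (vol j * vol l) *
      (LINT x|M. indicator (c j) x * e x) * (LINT x|M. indicator (c l) x * e x)"
    by (simp add: P.integral_fst_snd_mult[OF int int])
  also have "\<dots> = cell_matrix j l * coeff e j * coeff e l"
    unfolding cell_matrix_def coeff_def
    by (rule divide_mult_sqrt_split[OF vol_nonneg vol_nonneg])
  finally show ?thesis .
qed

lemma quad_form_cell_matrix_coeff:
  assumes "e \<in> L2 M"
  shows "quad_form N cell_matrix (coeff e) = (LINT p|(M \<Otimes>\<^sub>M M).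
    (\<Sum>j<N. \<Sum>l<N. indicator (c j \<times> c l) p) * (avg_kernel (fst p) (snd p) * e (fst p) * e (snd p)))"
proof -
  define h where "h p = avg_kernel (fst p) (snd p) * e (fst p) * e (snd p)" for p
  have int_rect: "integrable (M \<Otimes>\<^sub>M M) (\<lambda>p. indicator (c j \<times> c l) p * h p)" for j l
    using integrable_mult_indicator[OF _ integrable_avg_kernel_form[OF assms], of "c j \<times> c l"]
    by (simp add: h_def)
  have "(LINT p|(M \<Otimes>\<^sub>M M). (\<Sum>j<N. \<Sum>l<N. indicator (c j \<times> c l) p) * h p)
      = (LINT p|(M \<Otimes>\<^sub>M M). (\<Sum>j<N. \<Sum>l<N. indicator (c j \<times> c l) p * h p))"
    by (simp only: sum_distrib_right)
  also have "\<dots> = (\<Sum>j<N. LINT p|(M \<Otimes>\<^sub>M M). (\<Sum>l<N. indicator (c j \<times> c l) p * h p))"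
    by (intro Bochner_Integration.integral_sum Bochner_Integration.integrable_sum int_rect)
  also have "\<dots> = (\<Sum>j<N. \<Sum>l<N. LINT p|(M \<Otimes>\<^sub>M M). indicator (c j \<times> c l) p * h p)"
    by (intro sum.cong refl Bochner_Integration.integral_sum int_rect)
  also have "\<dots> = quad_form N cell_matrix (coeff e)"
    unfolding quad_form_def h_def using integral_avg_kernel_form_cell_rect[OF assms] by simp
  finally show ?thesis by (simp add: h_def)
qed

lemma quad_form_cell_matrix_tendsto:
  assumes "e \<in> L2 M"
  shows "(\<lambda>N. quad_form N cell_matrix (coeff e)) \<longlonglongrightarrow> (LINT x|M. intop M avg_kernel e x * e x)"
proof -
  have [measurable]: "e \<in> borel_measurable M" using assms by (rule L2_borel_measurable)
  define h where "h p = avg_kernel (fst p) (snd p) * e (fst p) * e (snd p)" for p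
  have [measurable]: "h \<in> borel_measurable (M \<Otimes>\<^sub>M M)" unfolding h_def by measurable
  have int_h: "integrable (M \<Otimes>\<^sub>M M) h"
    unfolding h_def using assms by (rule integrable_avg_kernel_form)
  have "(\<lambda>N. LINT p|(M \<Otimes>\<^sub>M M). (\<Sum>j<N. \<Sum>l<N. indicator (c j \<times> c l) p) * h p)
      \<longlonglongrightarrow> (LINT p|(M \<Otimes>\<^sub>M M). h p)"
  proof (rule integral_dominated_convergence[where w="\<lambda>p. norm (h p)"])
    show "integrable (M \<Otimes>\<^sub>M M) (\<lambda>p. norm (h p))" using int_h by (rule integrable_norm)
    show "AE p in M \<Otimes>\<^sub>M M.
        (\<lambda>N. (\<Sum>j<N. \<Sum>l<N. indicator (c j \<times> c l) p) * h p) \<longlonglongrightarrow> h p"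
    proof (intro AE_I2 tendsto_eventually)
      fix p
      show "\<forall>\<^sub>F N in sequentially. (\<Sum>j<N. \<Sum>l<N. indicator (c j \<times> c l) p) * h p = h p"
        using eventually_gt_at_top[of "max (cell_index (fst p)) (cell_index (snd p))"]
        by eventually_elim (simp add: sum_indicator_cell_rect)
    qed
  qed (auto simp: sum_indicator_cell_rect)
  then show ?thesis
    unfolding quad_form_cell_matrix_coeff[OF assms] integral_intop_avg_kernel[OF assms] h_def .
qed

definition K_over_cell :: "nat \<Rightarrow> 'a \<Rightarrow> real" where
  "K_over_cell l x = (LINT y|M. K x y * indicator (c l) y)"

lemma measurable_K_over_cell[measurable]: "K_over_cell l \<in> borel_measurable M"
  unfolding K_over_cell_def by measurable

lemma integrable_cell_K_over_cell: "integrable M (\<lambda>x. indicator (c j) x * K_over_cell l x)"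
proof -
  have "integrable (M \<Otimes>\<^sub>M M) (\<lambda>(x, y). indicator (c j) x * (K x y * indicator (c l) y))"
    using integrable_K_cell_rect[of j l] by (simp add: split_beta' indicator_times ac_simps)
  from P.integrable_fst'[OF this] show ?thesis by (simp add: K_over_cell_def)
qed

lemma integral_cell_K_over_cell: "(LINT x|M. indicator (c j) x * K_over_cell l x) = block j l"
  by (simp add: block_def K_over_cell_def set_lebesgue_integral_def ac_simps)

lemma AE_intop_K_step_fun:
  "AE x in M. intop M K (step_fun N v) x = (\<Sum>l<N. v l / sqrt (vol l) * K_over_cell l x)"
proof -
  have "AE x in M. integrable M (\<lambda>y. (K x y)\<^sup>2)"
    using P.AE_integrable_fst'[OF integrable_K_square] by simp
  then show ?thesis
  proof eventually_elim
    case (elim x)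
    then have "(\<lambda>y. K x y) \<in> L2 M"
      using measurable_Pair2[OF K_measurable, of x] by (simp add: L2_def space_M)
    then have "integrable M (\<lambda>y. K x y * indicator (c l) y)" for l
      by (rule L2_integrable_mult[OF _ L2_indicator_cell])
    then show ?case
      by (simp add: intop_def step_fun_def K_over_cell_def sum_distrib_left ac_simps)
  qed
qed

lemma quad_form_cell_matrix_eq_inner:
  "quad_form N cell_matrix v = (LINT x|M. intop M K (step_fun N v) x * step_fun N v x)"
proof -
  define a where "a j = v j / sqrt (vol j)" for j
  have "(LINT x|M. intop M K (step_fun N v) x * step_fun N v x)
      = (LINT x|M. (\<Sum>l<N. a l * K_over_cell l x) * step_fun N v x)"
  proof (rule integral_cong_AE)
    show "AE x in M. intop M K (step_fun N v) x * step_fun N v x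
        = (\<Sum>l<N. a l * K_over_cell l x) * step_fun N v x"
      using AE_intop_K_step_fun[of N v] by eventually_elim (simp add: a_def)
  qed (unfold intop_def, measurable)
  also have "\<dots> = (LINT x|M. (\<Sum>j<N. \<Sum>l<N. a j * a l * (indicator (c j) x * K_over_cell l x)))"
  proof (intro Bochner_Integration.integral_cong refl)
    fix x
    have "(\<Sum>l<N. a l * K_over_cell l x) * step_fun N v x =
        (\<Sum>j<N. a j * indicator (c j) x) * (\<Sum>l<N. a l * K_over_cell l x)"
      by (simp add: step_fun_def a_def)
    also have "\<dots> = (\<Sum>j<N. \<Sum>l<N. (a j * indicator (c j) x) * (a l * K_over_cell l x))"
      by (rule sum_product)
    finally show "(\<Sum>l<N. a l * K_over_cell l x) * step_fun N v x =
        (\<Sum>j<N. \<Sum>l<N. a j * a l * (indicator (c j) x * K_over_cell l x))"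
      by (simp add: ac_simps)
  qed
  also have "\<dots> = (\<Sum>j<N. \<Sum>l<N. a j * a l * block j l)"
    using integrable_cell_K_over_cell
    by (simp add: Bochner_Integration.integral_sum Bochner_Integration.integrable_sum
        integral_cell_K_over_cell)
  also have "\<dots> = quad_form N cell_matrix v"
    unfolding quad_form_def cell_matrix_def a_def
    by (intro sum.cong refl) (simp add: real_sqrt_mult field_simps)
  finally show ?thesis ..
qed

lemma cell_matrix_psd: "0 \<le> quad_form N cell_matrix v"
  using K_pos_def step_fun_L2 unfolding quad_form_cell_matrix_eq_inner L2_pos_def_kernel_def by blast

lemma cell_matrix_diag_nonneg: "0 \<le> cell_matrix j j"
  using cell_matrix_psd[of "Suc j" "\<lambda>i. if i = j then 1 else 0"] by (simp add: quad_form_unit_vector)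

lemma cell_matrix_diag_eq: "ennreal (cell_matrix j j) = (\<integral>\<^sup>+x. indicator (c j) x * ennreal (avg_kernel x x) \<partial>M)"
proof (cases "vol j = 0")
  case True
  then have "(\<integral>\<^sup>+x. indicator (c j) x * ennreal (avg_kernel x x) \<partial>M) = (\<integral>\<^sup>+x. 0 \<partial>M)"
    by (intro nn_integral_cong) (simp add: indicator_def avg_kernel_null_cell)
  then show ?thesis using True by (simp add: cell_matrix_def)
next
  case False
  then have "0 < vol j" using vol_nonneg[of j] by simp
  have "(\<integral>\<^sup>+x. indicator (c j) x * ennreal (avg_kernel x x) \<partial>M)
      = (\<integral>\<^sup>+x. ennreal (block j j / (vol j * vol j)) * indicator (c j) x \<partial>M)"
    using AE_notin_Z by (intro nn_integral_cong_AE) (auto elim!: eventually_mono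
        simp: indicator_def avg_kernel_cells)
  also have "\<dots> = ennreal (block j j / (vol j * vol j)) * ennreal (vol j)"
    by (simp add: nn_integral_cmult_indicator emeasure_cell)
  also have "\<dots> = ennreal (cell_matrix j j)"
    using \<open>0 < vol j\<close> cell_matrix_diag_nonneg[of j]
    by (simp add: cell_matrix_def ennreal_mult[symmetric] zero_le_divide_iff)
  finally show ?thesis ..
qed

lemma sum_cell_matrix_diag_le: "ennreal (\<Sum>j<N. cell_matrix j j) \<le> (\<integral>\<^sup>+x. ennreal (avg_kernel x x) \<partial>M)"
proof -
  have "ennreal (\<Sum>j<N. cell_matrix j j) = (\<Sum>j<N. \<integral>\<^sup>+x. indicator (c j) x * ennreal (avg_kernel x x) \<partial>M)"
    using cell_matrix_diag_nonneg by (simp add: sum_ennreal[symmetric] cell_matrix_diag_eq)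
  also have "\<dots> = (\<integral>\<^sup>+x. (\<Sum>j<N. indicator (c j) x * ennreal (avg_kernel x x)) \<partial>M)"
    by (rule nn_integral_sum[symmetric]) measurable
  also have "\<dots> \<le> (\<integral>\<^sup>+x. ennreal (avg_kernel x x) \<partial>M)"
    by (intro nn_integral_mono)
      (simp add: indicator_cell if_distrib[of "\<lambda>x. x * _"] sum_lessThan_delta cong: if_cong)
  finally show ?thesis .
qed

theorem op_trace_avg_kernel_le: "op_trace M avg_kernel \<le> enn2ereal (\<integral>\<^sup>+x. ennreal (avg_kernel x x) \<partial>M)"
  unfolding op_trace_def
proof (rule SUP_least, clarsimp)
  fix m e assume on: "orthonormal_fam M m e"
  have "(\<lambda>N. \<Sum>i<m. quad_form N cell_matrix (coeff (e i)))
      \<longlonglongrightarrow> (\<Sum>i<m. LINT x|M. intop M avg_kernel (e i) x * e i x)"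
    using orthonormal_fam_L2[OF on] by (intro tendsto_sum quad_form_cell_matrix_tendsto) simp
  moreover have "ennreal (\<Sum>i<m. quad_form N cell_matrix (coeff (e i))) \<le> (\<integral>\<^sup>+x. ennreal (avg_kernel x x) \<partial>M)" for N
    using psd_quad_form_trace_bound[OF cell_matrix_psd bessel_coeff[OF on]]
    by (intro order_trans[OF ennreal_leI sum_cell_matrix_diag_le])
  ultimately show "ereal (\<Sum>i<m. LINT x|M. intop M avg_kernel (e i) x * e i x)
      \<le> enn2ereal (\<integral>\<^sup>+x. ennreal (avg_kernel x x) \<partial>M)"
    by (rule LIMSEQ_le_ennreal_bound)
qed

end

lemma partitionP_enumeration:
  assumes A_open: "\<And>k. open (A k)" and A_cover: "(\<Union>k. A k) = UNIV"
    and U_open: "\<And>n. open (U n)"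
  obtains c :: "nat \<Rightarrow> 'a::topological_space set"
  where "disjoint_family c" "(\<Union>j. c j) = UNIV" "range c \<subseteq> insert {} (partitionP A U n)"
proof (rule countable_partition_enumeration[OF partitionP_countable])
  show "partitionP A U n \<noteq> {}" "\<Union>(partitionP A U n) = UNIV"
    using partitionP_covers[of A U, OF A_open A_cover U_open] by blast+
  show "B = B'" if "B \<in> partitionP A U n" "B' \<in> partitionP A U n" "x \<in> B" "x \<in> B'" for B B' x
    using partitionP_disjoint[of A U, OF A_open U_open that] .
qed

lemma cell_kernel_partitionP:
  fixes M :: "'a::t2_space measure"
  assumes sets_M: "sets M = sets borel"
    and locfin: "\<And>x. \<exists>S. open S \<and> x \<in> S \<and> emeasure M S < \<infinity>"
    and A_open: "\<And>k. open (A k)"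
    and A_int: "\<And>k. \<exists>C. compact C \<and> A k = interior C"
    and A_cover: "(\<Union>k. A k) = UNIV"
    and U_open: "\<And>n. open (U n)"
    and K_meas: "(\<lambda>(x, y). K x y) \<in> borel_measurable (M \<Otimes>\<^sub>M M)"
    and K_L2: "integrable (M \<Otimes>\<^sub>M M) (\<lambda>(x, y). (K x y)\<^sup>2)"
    and K_pd: "L2_pos_def_kernel M K"
    and c: "disjoint_family c" "(\<Union>j. c j) = UNIV" "range c \<subseteq> insert {} (partitionP A U n)"
  shows "cell_kernel M c (nullpts M A U) K"
proof
  have c_cases: "c j = {} \<or> c j \<in> partitionP A U n" for j
    using c(3) by auto
  have fin: "emeasure M B < \<infinity>" if "B \<in> partitionP A U n" for B
    using partitionP_emeasure_finite[where A = A, OF sets_M locfin A_int that] .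
  show "space M = UNIV" using sets_eq_imp_space_eq[OF sets_M] by simp
  show "c j \<in> sets M" "emeasure M (c j) < \<infinity>" for j
    using c_cases[of j] partitionP_sets_borel[of A U, OF A_open U_open] sets_M fin by auto
  show "nullpts M A U \<in> null_sets M"
    using nullpts_null_sets[OF sets_M A_open A_cover U_open] .
  show "c j \<subseteq> nullpts M A U" if "measure M (c j) = 0" for j
  proof
    fix x assume x: "x \<in> c j"
    then have P: "c j \<in> partitionP A U n" using c_cases[of j] by auto
    then have "emeasure M (cellO A U n x) = 0"
      using that fin[OF P] cellO_eq[of A U, OF A_open A_cover U_open P x]
      by (auto simp: measure_def enn2real_eq_0_iff)
    then show "x \<in> nullpts M A U" unfolding nullpts_def by blast
  qed
qed (use c K_meas K_L2 K_pd in simp_all)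

lemma op_trace_En_le:
  fixes M :: "'a::t2_space measure"
  assumes sets_M: "sets M = sets borel"
    and locfin: "\<And>x. \<exists>S. open S \<and> x \<in> S \<and> emeasure M S < \<infinity>"
    and A_open: "\<And>k. open (A k)"
    and A_int: "\<And>k. \<exists>C. compact C \<and> A k = interior C"
    and A_cover: "(\<Union>k. A k) = UNIV"
    and U_open: "\<And>n. open (U n)"
    and K_meas: "(\<lambda>(x, y). K x y) \<in> borel_measurable (M \<Otimes>\<^sub>M M)"
    and K_L2: "integrable (M \<Otimes>\<^sub>M M) (\<lambda>(x, y). (K x y)\<^sup>2)"
    and K_pd: "L2_pos_def_kernel M K"
  shows "op_trace M (En M A U n K) \<le> enn2ereal (\<integral>\<^sup>+x. ennreal (En M A U n K x x) \<partial>M)"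
proof -
  obtain c :: "nat \<Rightarrow> 'a set" where c: "disjoint_family c" "(\<Union>j. c j) = UNIV"
    and c_P: "range c \<subseteq> insert {} (partitionP A U n)"
    using partitionP_enumeration[of A U, OF A_open A_cover U_open] by blast
  interpret cell_kernel M c "nullpts M A U" K
    by (rule cell_kernel_partitionP[OF assms c c_P])
  have "cellO A U n x = c (cell_index x)" for x
    using c_P in_cell_index[of x] cellO_eq[of A U, OF A_open A_cover U_open] by blast
  then have "En M A U n K = avg_kernel"
    by (simp add: fun_eq_iff En_def avg_kernel_def vol_def block_def)
  then show ?thesis using op_trace_avg_kernel_le by simp
qed

lemma limsup_less_top_if_bounded:
  fixes f :: "nat \<Rightarrow> ereal" and g :: "nat \<Rightarrow> ennreal"
  assumes le: "\<And>n. f n \<le> enn2ereal (g n)" and "limsup g < \<infinity>"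
  shows "limsup f < \<infinity>"
proof -
  obtain l where l: "limsup g < l" "l < \<infinity>" using \<open>limsup g < \<infinity>\<close> by (meson dense)
  have "eventually (\<lambda>n. g n < l) sequentially" using Limsup_lessD[OF l(1)] .
  then have "eventually (\<lambda>n. f n \<le> enn2ereal l) sequentially"
  proof eventually_elim
    case (elim n)
    then have "enn2ereal (g n) \<le> enn2ereal l"
      by (simp add: less_imp_le less_eq_ennreal.rep_eq[symmetric])
    with le[of n] show ?case by (rule order_trans)
  qed
  then have "limsup f \<le> enn2ereal l" by (rule Limsup_bounded)
  also have "\<dots> < \<infinity>" using l(2) by (simp add: less_top[symmetric])
  finally show ?thesis .
qed

theorem lemma4p2:
  fixes M :: "'a::{t2_space, second_countable_topology} measure"
    and A U :: "nat \<Rightarrow> 'a set"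
    and K :: "'a \<Rightarrow> 'a \<Rightarrow> real"
  assumes loccpt: "locally_compact_space (euclidean :: 'a topology)"
    and sets_M: "sets M = sets borel"
    and nondeg: "\<And>S. open S \<Longrightarrow> S \<noteq> {} \<Longrightarrow> emeasure M S > 0"
    and sfin: "sigma_finite_measure M"
    and locfin: "\<And>x. \<exists>S. open S \<and> x \<in> S \<and> emeasure M S < \<infinity>"
    and A_open: "\<And>k. open (A k)"
    and A_int: "\<And>k. \<exists>C. compact C \<and> A k = interior C"
    and A_fin: "\<And>k. emeasure M (A k) < \<infinity>"
    and A_cover: "(\<Union>k. A k) = UNIV"
    and U_open: "\<And>n. open (U n)"
    and U_base: "\<And>S x. open S \<Longrightarrow> x \<in> S \<Longrightarrow> \<exists>n. x \<in> U n \<and> U n \<subseteq> S"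
    and K_meas: "(\<lambda>(x, y). K x y) \<in> borel_measurable (M \<Otimes>\<^sub>M M)"
    and K_L2: "integrable (M \<Otimes>\<^sub>M M) (\<lambda>(x, y). (K x y)\<^sup>2)"
    and K_pd: "L2_pos_def_kernel M K"
    and hyp: "limsup (\<lambda>n. \<integral>\<^sup>+ x. ennreal (En M A U n K x x) \<partial>M) < \<infinity>"
  shows "limsup (\<lambda>n. op_trace M (En M A U n K)) < \<infinity>"
  using op_trace_En_le[OF sets_M locfin A_open A_int A_cover U_open K_meas K_L2 K_pd] hyp
  by (rule limsup_less_top_if_bounded)

end
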